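(* Let $R$ be a commutative ring with nonzero identity, $\delta$ an expansion of ideals of $R$, and $I,J,K$ proper ideals of $R$ with $J\subseteq K\subseteq I$. If $I$ is a $\delta$-$n$-ideal of $R$ and $\delta(J)=\delta(I)$, then $K$ is a $\delta$-$n$-ideal of $R$.
   Context: An expansion of ideals of a ring $R$ is a map $\delta$ from the set of ideals of $R$ to itself such that $I\subseteq\delta(I)$ for every ideal $I$, and $\delta(I)\subseteq\delta(J)$ whenever $I\subseteq J$. $\sqrt{0}$ denotes the nilradical of $R$. Given an expansion $\delta$, a proper ideal $I$ of $R$ is a $\delta$-$n$-ideal if whenever $a,b\in R$ with $ab\in I$ and $a\notin\sqrt{0}$, then $b\in\delta(I)$. *)

theory Defs
  imports "HOL-Algebra.Algebra"
begin

definition nilradical :: "('a, 'b) ring_scheme \<Rightarrow> 'a set" where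
  "nilradical R = {a \<in> carrier R. \<exists>n::nat. a [^]\<^bsub>R\<^esub> n = \<zero>\<^bsub>R\<^esub>}"

definition expansion :: "('a, 'b) ring_scheme \<Rightarrow> ('a set \<Rightarrow> 'a set) \<Rightarrow> bool" where
  "expansion R \<delta> \<longleftrightarrow>
     (\<forall>I. ideal I R \<longrightarrow> ideal (\<delta> I) R \<and> I \<subseteq> \<delta> I) \<and>
     (\<forall>I J. ideal I R \<longrightarrow> ideal J R \<longrightarrow> I \<subseteq> J \<longrightarrow> \<delta> I \<subseteq> \<delta> J)"

definition delta_n_ideal :: "('a, 'b) ring_scheme \<Rightarrow> ('a set \<Rightarrow> 'a set) \<Rightarrow> 'a set \<Rightarrow> bool" where
  "delta_n_ideal R \<delta> I \<longleftrightarrow> ideal I R \<and> I \<noteq> carrier R \<and>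
     (\<forall>a \<in> carrier R. \<forall>b \<in> carrier R.
        a \<otimes>\<^bsub>R\<^esub> b \<in> I \<longrightarrow> a \<notin> nilradical R \<longrightarrow> b \<in> \<delta> I)"

end

theory Submission
  imports Defs
begin

lemma expansion_mono:
  assumes "expansion R \<delta>" and "ideal I R" and "ideal J R" and "I \<subseteq> J"
  shows "\<delta> I \<subseteq> \<delta> J"
  using assms unfolding expansion_def by blast

lemma delta_n_ideal_subideal:
  assumes "delta_n_ideal R \<delta> I" and "ideal K R" and "K \<noteq> carrier R"
    and "K \<subseteq> I" and "\<delta> I \<subseteq> \<delta> K"
  shows "delta_n_ideal R \<delta> K"
  using assms unfolding delta_n_ideal_def by blast

theorem proposition2p18:
  fixes R :: "('a, 'b) ring_scheme" and \<delta> :: "'a set \<Rightarrow> 'a set" and I J K :: "'a set"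
  assumes "cring R" and "\<one>\<^bsub>R\<^esub> \<noteq> \<zero>\<^bsub>R\<^esub>"
    and "expansion R \<delta>"
    and "ideal I R" and "I \<noteq> carrier R"
    and "ideal J R" and "J \<noteq> carrier R"
    and "ideal K R" and "K \<noteq> carrier R"
    and "J \<subseteq> K" and "K \<subseteq> I"
    and "delta_n_ideal R \<delta> I"
    and "\<delta> J = \<delta> I"
  shows "delta_n_ideal R \<delta> K"
proof (rule delta_n_ideal_subideal)
  show "delta_n_ideal R \<delta> I" "ideal K R" "K \<noteq> carrier R" "K \<subseteq> I"
    using assms by simp_all
  have "\<delta> J \<subseteq> \<delta> K"
    using expansion_mono \<open>expansion R \<delta>\<close> \<open>ideal J R\<close> \<open>ideal K R\<close> \<open>J \<subseteq> K\<close> .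
  then show "\<delta> I \<subseteq> \<delta> K"
    using \<open>\<delta> J = \<delta> I\<close> by simp
qed

end
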